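(* Let $\boldsymbol{\Sigma}\in\mathbb{R}^{d\times d}$ be a symmetric positive semidefinite matrix with eigenvalues $\lambda_1^\star\ge\lambda_2^\star\ge\dots\ge\lambda_d^\star$ and corresponding orthonormal eigenvectors $\mathbf{u}_1^\star,\dots,\mathbf{u}_d^\star$, and assume $1=\lambda_1^\star>\lambda_2^\star>\cdots$. Let $k\in\{1,\dots,d-1\}$, let $\mathbf{v}_{1,\ell-1},\dots,\mathbf{v}_{k-1,\ell-1}\in\mathbb{R}^d$ be unit vectors, define $$\boldsymbol{\Sigma}_{k,\ell}=\boldsymbol{\Sigma}-\sum_{k'=1}^{k-1}\big(\mathbf{v}_{k',\ell-1}^\top\boldsymbol{\Sigma}\mathbf{v}_{k',\ell-1}\big)\mathbf{v}_{k',\ell-1}\mathbf{v}_{k',\ell-1}^\top,$$ and let $\mathbf{u}_{k,\ell}$ denote the (unit-norm) top eigenvector of $\boldsymbol{\Sigma}_{k,\ell}$. If for some $c_0>1$ $$\sum_{k'=1}^{k-1}\lambda_{k'}^\star\|\mathbf{u}_{k'}^\star-\mathbf{v}_{k',\ell-1}\|_2\le\frac{c_0-1}{4c_0}\big(\lambda_k^\star-\lambda_{k+1}^\star\big),$$ then $$\|\mathbf{u}_{k,\ell}-\mathbf{u}_k^\star\|_2\le\frac{4c_0}{\lambda_k^\star-\lambda_{k+1}^\star}\sum_{k'=1}^{k-1}\lambda_{k'}^\star\|\mathbf{u}_{k'}^\star-\mathbf{v}_{k',\ell-1}\|_2 .$$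
   Context: The vectors $\mathbf{v}_{k',\ell-1}$ play the role of the current estimates (from communication round $\ell-1$) of the first $k-1$ eigenvectors in a parallel deflation scheme; $\boldsymbol{\Sigma}_{k,\ell}$ is the corresponding deflated matrix. The top eigenvector of a symmetric matrix is a unit eigenvector for its largest eigenvalue. *)

theory Defs
  imports "HOL-Analysis.Analysis"
begin

definition outer :: "real^'n \<Rightarrow> real^'n \<Rightarrow> real^'n^'n" where
  "outer v w = (\<chi> i j. v $ i * w $ j)"

definition deflated :: "real^'n^'n \<Rightarrow> (nat \<Rightarrow> real^'n) \<Rightarrow> nat \<Rightarrow> real^'n^'n" where
  "deflated S v k = S - (\<Sum>k'\<in>{1..<k}. (v k' \<bullet> (S *v v k')) *\<^sub>R outer (v k') (v k'))"

definition is_top_eigvec :: "real^'n^'n \<Rightarrow> real^'n \<Rightarrow> bool" where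
  "is_top_eigvec A w \<longleftrightarrow> norm w = 1 \<and>
     (\<exists>\<mu>. A *v w = \<mu> *\<^sub>R w \<and> (\<forall>\<nu> x. x \<noteq> 0 \<and> A *v x = \<nu> *\<^sub>R x \<longrightarrow> \<nu> \<le> \<mu>))"

end

(*
  Write M for the deflated matrix and mu for the eigenvalue of its top eigenvector w.
  Courant-Fischer with a test vector in span(u_1..u_k) orthogonal to v_1..v_{k-1}
  gives mu >= lambda_k; expanding the Rayleigh quotient of w in the eigenbasis gives
  mu <= lambda_k + 4 eps, where eps = sum_{k'<k} lambda_k' |u_k' - v_k'|.
  Taking the coordinates c_j = <w, u_j> in the eigen-equation M w = mu w, every
  coordinate j <> k is controlled by the gap g = lambda_k - lambda_{k+1}: for j > k
  directly, and for j < k because the deflation weight v_j^T S v_j is close to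
  lambda_j from below. Summing the squares gives (g - 2 eps)^2 (1 - c_k^2) <= 5/2 eps^2
  when eps is small compared with g, which bounds |w - u_k|; when eps is large the
  hypothesis forces c0 >= 5/2 and the trivial bound |w - u_k| <= sqrt 2 suffices.
*)
theory Submission
  imports Defs
begin

lemma outer_mult_vec: "outer v v *v x = (v \<bullet> x) *\<^sub>R (v::real^'n)"
  by (simp add: outer_def matrix_vector_mult_def inner_vec_def vec_eq_iff sum_distrib_left
      mult.commute mult.left_commute)

lemma sum_matrix_vector_mult: "sum f A *v (x::real^'n) = (\<Sum>i\<in>A. f i *v x)"
  by (induct A rule: infinite_finite_induct) (auto simp: matrix_vector_mult_add_rdistrib)

lemma deflated_mult_vec:
  "deflated S v k *v x = S *v x - (\<Sum>i\<in>{1..<k}. ((v i \<bullet> (S *v v i)) * (v i \<bullet> x)) *\<^sub>R v i)"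
  by (simp add: deflated_def matrix_vector_mult_diff_rdistrib sum_matrix_vector_mult outer_mult_vec
      flip: scaleR_matrix_vector_assoc)

lemma inner_deflated_mult:
  "y \<bullet> (deflated S v k *v x)
     = y \<bullet> (S *v x) - (\<Sum>i\<in>{1..<k}. (v i \<bullet> (S *v v i)) * (v i \<bullet> x) * (v i \<bullet> y))"
  by (simp add: deflated_mult_vec inner_diff_right inner_sum_right mult.assoc inner_commute)

lemma deflated_symmetric:
  assumes "\<And>x y. x \<bullet> (S *v y) = y \<bullet> (S *v x)"
  shows "x \<bullet> (deflated S v k *v y) = y \<bullet> (deflated S v k *v x)"
  unfolding inner_deflated_mult using assms[of x y] by (simp add: mult.commute mult.left_commute)

lemma orthonormal_family_inj_independent:
  fixes u :: "'i \<Rightarrow> 'a::euclidean_space"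
  assumes orth: "\<And>i j. i \<in> I \<Longrightarrow> j \<in> I \<Longrightarrow> u i \<bullet> u j = (if i = j then 1 else 0)"
  shows "inj_on u I" "independent (u ` I)"
proof -
  show "inj_on u I"
    by (rule inj_onI) (metis orth zero_neq_one)
  have "0 \<notin> u ` I" using orth by force
  moreover have "pairwise orthogonal (u ` I)"
    using orth unfolding pairwise_def orthogonal_def by auto
  ultimately show "independent (u ` I)" by (intro pairwise_orthogonal_independent)
qed

lemma dim_orthonormal_family:
  fixes u :: "'i \<Rightarrow> 'a::euclidean_space"
  assumes "finite I" "\<And>i j. i \<in> I \<Longrightarrow> j \<in> I \<Longrightarrow> u i \<bullet> u j = (if i = j then 1 else 0)"
  shows "dim (u ` I) = card I"
  using orthonormal_family_inj_independent[OF assms(2)]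
  by (simp add: dim_eq_card_independent card_image)

lemma exists_orthogonal_in_subspace:
  fixes V F :: "'a::euclidean_space set"
  assumes "subspace V" "dim F < dim V"
  obtains x where "x \<in> V" "x \<noteq> 0" "\<forall>y\<in>F. orthogonal y x"
proof -
  define W where "W = {x. \<forall>y\<in>span F. orthogonal y x}"
  have subW: "subspace W"
    unfolding W_def subspace_def orthogonal_def by (auto simp: inner_add_right)
  have "dim W + dim F = DIM('a)"
    using dim_subspace_orthogonal_to_vectors[of "span F" UNIV] by (simp add: W_def)
  moreover have "dim {x + y |x y. x \<in> V \<and> y \<in> W} \<le> DIM('a)"
    by (rule dim_subset_UNIV)
  moreover have "dim {x + y |x y. x \<in> V \<and> y \<in> W} + dim (V \<inter> W) = dim V + dim W"
    by (rule dim_sums_Int[OF assms(1) subW])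
  ultimately have "0 < dim (V \<inter> W)" using assms(2) by linarith
  then obtain x where "x \<in> V \<inter> W" "x \<noteq> 0"
    by (metis dim_eq_0 less_numeral_extra(3) subsetI singletonI)
  then show ?thesis
    using that by (auto simp: W_def intro: span_base)
qed

lemma linear_coeff_zero_if_quadratic_nonneg:
  fixes b c :: real
  assumes nonneg: "\<And>t. 0 \<le> t * b + t\<^sup>2 * c"
  shows "b = 0"
proof (rule ccontr)
  assume "b \<noteq> 0"
  define t where "t = - b / (\<bar>c\<bar> + 1)"
  have "0 < b * b" using \<open>b \<noteq> 0\<close> by (metis not_real_square_gt_zero)
  then have pos: "0 < - (t * b)" by (simp add: t_def divide_pos_pos)
  have "t\<^sup>2 * c \<le> t\<^sup>2 * \<bar>c\<bar>" by (simp add: mult_left_mono)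
  also have "\<dots> = - (t * b) * (\<bar>c\<bar> / (\<bar>c\<bar> + 1))"
    by (simp add: t_def power2_eq_square field_simps)
  also have "\<dots> < - (t * b) * 1"
    using pos by (intro mult_strict_left_mono) simp_all
  finally show False using nonneg[of t] by linarith
qed

lemma rayleigh_maximizer_eigenvector:
  fixes M :: "real^'n^'n"
  assumes sym: "\<And>x y. x \<bullet> (M *v y) = y \<bullet> (M *v x)"
    and le: "\<And>z. z \<bullet> (M *v z) \<le> R * (norm z)\<^sup>2"
    and eq: "x \<bullet> (M *v x) = R * (norm x)\<^sup>2"
  shows "M *v x = R *\<^sub>R x"
proof -
  \<comment> \<open>\<open>R \<parallel>z\<parallel>\<^sup>2 - z \<bullet> M z\<close> is nonnegative and vanishes at \<open>x\<close>, so along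
     \<open>x + t y\<close> its coefficient of \<open>t\<close>, namely \<open>2 \<parallel>y\<parallel>\<^sup>2\<close>, must vanish.\<close>
  define y where "y = R *\<^sub>R x - M *v x"
  have "0 \<le> t * (2 * (y \<bullet> y)) + t\<^sup>2 * (R * (y \<bullet> y) - y \<bullet> (M *v y))" for t
  proof -
    have le': "(x + t *\<^sub>R y) \<bullet> (M *v (x + t *\<^sub>R y)) \<le> R * ((x + t *\<^sub>R y) \<bullet> (x + t *\<^sub>R y))"
      using le by (simp only: power2_norm_eq_inner)
    have lhs: "(x + t *\<^sub>R y) \<bullet> (M *v (x + t *\<^sub>R y))
        = x \<bullet> (M *v x) + 2 * t * (y \<bullet> (M *v x)) + t\<^sup>2 * (y \<bullet> (M *v y))"
      using sym[of x y] by (simp add: matrix_vector_right_distrib matrix_vector_mult_scaleR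
          inner_add_left inner_add_right power2_eq_square algebra_simps)
    have rhs: "(x + t *\<^sub>R y) \<bullet> (x + t *\<^sub>R y) = x \<bullet> x + 2 * t * (x \<bullet> y) + t\<^sup>2 * (y \<bullet> y)"
      by (simp add: inner_add_left inner_add_right inner_commute power2_eq_square algebra_simps)
    have yy: "y \<bullet> y = R * (x \<bullet> y) - y \<bullet> (M *v x)"
      using sym[of x y] by (simp add: y_def inner_diff_left inner_commute)
    have "0 \<le> R * (x \<bullet> x + 2 * t * (x \<bullet> y) + t\<^sup>2 * (y \<bullet> y))
        - (x \<bullet> (M *v x) + 2 * t * (y \<bullet> (M *v x)) + t\<^sup>2 * (y \<bullet> (M *v y)))"
      using le' unfolding lhs rhs by linarith
    also have "\<dots> = t * (2 * (y \<bullet> y)) + t\<^sup>2 * (R * (y \<bullet> y) - y \<bullet> (M *v y))"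
      using eq unfolding power2_norm_eq_inner yy by (simp add: algebra_simps)
    finally show ?thesis .
  qed
  then have "2 * (y \<bullet> y) = 0" by (rule linear_coeff_zero_if_quadratic_nonneg)
  then show ?thesis by (simp add: y_def)
qed

lemma rayleigh_quotient_attains_max:
  fixes M :: "real^'n^'n"
  obtains x where "norm x = 1" "\<And>z. z \<bullet> (M *v z) \<le> (x \<bullet> (M *v x)) * (norm z)\<^sup>2"
proof -
  let ?f = "\<lambda>x. x \<bullet> (M *v x)"
  obtain e :: "real^'n" where "norm e = 1" using vector_choose_size[of 1] by auto
  then have "sphere (0::real^'n) 1 \<noteq> {}" by auto
  moreover have "continuous_on (sphere 0 1) ?f" by (intro continuous_intros)
  ultimately obtain x where x: "x \<in> sphere 0 1" and max: "\<And>y. y \<in> sphere 0 1 \<Longrightarrow> ?f y \<le> ?f x"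
    using continuous_attains_sup[OF compact_sphere] by blast
  have "?f z \<le> ?f x * (norm z)\<^sup>2" for z
  proof (cases "z = 0")
    case False
    then have "?f (z /\<^sub>R norm z) \<le> ?f x" by (intro max) simp
    moreover have "?f (z /\<^sub>R norm z) = ?f z / (norm z)\<^sup>2"
      by (simp add: matrix_vector_mult_scaleR power2_eq_square divide_inverse)
    ultimately show ?thesis using False by (simp add: divide_le_eq)
  qed simp
  then show ?thesis using that x by simp
qed

lemma is_top_eigvec_eigenvalue:
  assumes "is_top_eigvec M w"
  shows "M *v w = (w \<bullet> (M *v w)) *\<^sub>R w"
proof -
  obtain \<mu> where "norm w = 1" "M *v w = \<mu> *\<^sub>R w"
    using assms unfolding is_top_eigvec_def by blast
  then show ?thesis by (simp add: norm_eq_1)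
qed

lemma is_top_eigvec_rayleigh_le:
  fixes M :: "real^'n^'n"
  assumes sym: "\<And>x y. x \<bullet> (M *v y) = y \<bullet> (M *v x)"
    and top: "is_top_eigvec M w"
  shows "z \<bullet> (M *v z) \<le> (w \<bullet> (M *v w)) * (norm z)\<^sup>2"
proof -
  obtain \<mu> where w: "norm w = 1" "M *v w = \<mu> *\<^sub>R w"
    and top_eig: "\<And>\<nu> x. x \<noteq> 0 \<Longrightarrow> M *v x = \<nu> *\<^sub>R x \<Longrightarrow> \<nu> \<le> \<mu>"
    using top unfolding is_top_eigvec_def by blast
  have \<mu>: "\<mu> = w \<bullet> (M *v w)" using w by (simp add: norm_eq_1)
  obtain x where x: "norm x = 1" and max: "\<And>z. z \<bullet> (M *v z) \<le> (x \<bullet> (M *v x)) * (norm z)\<^sup>2"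
    using rayleigh_quotient_attains_max[of M] by blast
  have "M *v x = (x \<bullet> (M *v x)) *\<^sub>R x"
    using x by (intro rayleigh_maximizer_eigenvector[OF sym max]) simp
  moreover have "x \<noteq> 0" using x by auto
  ultimately have "x \<bullet> (M *v x) \<le> w \<bullet> (M *v w)" using top_eig \<mu> by blast
  then show ?thesis
    using max[of z] by (meson mult_right_mono order_trans zero_le_power2)
qed

locale eigenbasis =
  fixes S :: "real^'n^'n" and lam :: "nat \<Rightarrow> real" and u :: "nat \<Rightarrow> real^'n"
  assumes orthonormal: "\<And>i j. i \<in> {1..CARD('n)} \<Longrightarrow> j \<in> {1..CARD('n)} \<Longrightarrow>
      u i \<bullet> u j = (if i = j then 1 else 0)"
    and eigenvector: "\<And>i. i \<in> {1..CARD('n)} \<Longrightarrow> S *v u i = lam i *\<^sub>R u i"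
begin

lemma norm_u: "i \<in> {1..CARD('n)} \<Longrightarrow> norm (u i) = 1"
  using orthonormal[of i i] by (simp add: norm_eq_1)

lemma expansion: "x = (\<Sum>j\<in>{1..CARD('n)}. (x \<bullet> u j) *\<^sub>R u j)"
proof -
  let ?N = "{1..CARD('n)}"
  have "dim (u ` ?N) = card ?N"
    by (rule dim_orthonormal_family) (simp_all add: orthonormal)
  then have span: "span (u ` ?N) = UNIV"
    by (simp flip: dim_eq_full)
  define y where "y = x - (\<Sum>j\<in>?N. (x \<bullet> u j) *\<^sub>R u j)"
  have y_orth: "y \<bullet> u i = 0" if "i \<in> ?N" for i
  proof -
    have "(\<Sum>j\<in>?N. (x \<bullet> u j) *\<^sub>R u j) \<bullet> u i = (\<Sum>j\<in>?N. if j = i then x \<bullet> u i else 0)"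
      unfolding inner_sum_left by (rule sum.cong) (use orthonormal that in auto)
    then show ?thesis using that by (simp add: y_def inner_diff_left)
  qed
  have "y \<in> span (u ` ?N)" by (simp only: span UNIV_I)
  then have "orthogonal y y"
    by (rule orthogonal_to_span) (use y_orth in \<open>auto simp: orthogonal_def\<close>)
  then show ?thesis by (simp add: y_def orthogonal_def)
qed

lemma inner_eq_sum_coords: "x \<bullet> y = (\<Sum>j\<in>{1..CARD('n)}. (x \<bullet> u j) * (y \<bullet> u j))"
  by (subst expansion[of x]) (simp only: inner_sum_left inner_scaleR_left inner_commute[of "u _" y])

lemma inner_mult_eq_sum_coords:
  "x \<bullet> (S *v y) = (\<Sum>j\<in>{1..CARD('n)}. lam j * (x \<bullet> u j) * (y \<bullet> u j))"
proof -
  have "S *v y = (\<Sum>j\<in>{1..CARD('n)}. ((y \<bullet> u j) * lam j) *\<^sub>R u j)"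
    by (subst expansion[of y])
      (simp add: linear_sum[OF matrix_vector_mul_linear] matrix_vector_mult_scaleR eigenvector)
  then show ?thesis by (simp add: inner_sum_right mult.commute mult.left_commute)
qed

lemma inner_mult_commute: "x \<bullet> (S *v y) = y \<bullet> (S *v x)"
  unfolding inner_mult_eq_sum_coords by (simp add: mult.commute mult.left_commute)

lemma inner_mult_u: "i \<in> {1..CARD('n)} \<Longrightarrow> x \<bullet> (S *v u i) = lam i * (x \<bullet> u i)"
  by (simp add: eigenvector)

lemma exists_orthogonal_in_leading_span:
  assumes "k \<le> CARD('n)" "1 \<le> k"
  obtains x where "x \<noteq> 0" "\<And>i. i \<in> {1..<k} \<Longrightarrow> v i \<bullet> x = 0"
    "\<And>j. j \<in> {1..CARD('n)} \<Longrightarrow> k < j \<Longrightarrow> x \<bullet> u j = 0"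
proof -
  have orth_k: "\<And>i j. i \<in> {1..k} \<Longrightarrow> j \<in> {1..k} \<Longrightarrow> u i \<bullet> u j = (if i = j then 1 else 0)"
    using orthonormal assms(1) by auto
  have "dim (v ` {1..<k}) \<le> card (v ` {1..<k})" by (rule dim_le_card') simp
  also have "\<dots> < k" using assms(2) card_image_le[of "{1..<k}" v] by simp
  also have "k = dim (span (u ` {1..k}))"
    using dim_orthonormal_family[of "{1..k}" u] orth_k by simp
  finally obtain x where x: "x \<in> span (u ` {1..k})" "x \<noteq> 0" "\<forall>y\<in>v ` {1..<k}. orthogonal y x"
    using exists_orthogonal_in_subspace[OF subspace_span] by blast
  have "x \<bullet> u j = 0" if "j \<in> {1..CARD('n)}" "k < j" for j
  proof -
    have "orthogonal (u j) x"
      by (rule orthogonal_to_span[OF x(1)]) (use orthonormal that in \<open>auto simp: orthogonal_def\<close>)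
    then show ?thesis by (simp add: orthogonal_def inner_commute)
  qed
  then show ?thesis using that x by (auto simp: orthogonal_def)
qed

end

lemma weighted_sq_diff_le:
  fixes l c q a d :: real
  assumes "0 \<le> l" "0 \<le> d" "0 \<le> a" "l - 2 * l * d \<le> a"
    and "\<bar>c\<bar> \<le> 1" "\<bar>q\<bar> \<le> 1" "\<bar>q - c\<bar> \<le> d"
  shows "l * c\<^sup>2 - a * q\<^sup>2 \<le> 4 * l * d"
proof -
  have "c\<^sup>2 - q\<^sup>2 \<le> 2 * d"
  proof -
    have "c\<^sup>2 - q\<^sup>2 = (c - q) * (c + q)" by (simp add: power2_eq_square algebra_simps)
    also have "\<dots> \<le> \<bar>c - q\<bar> * \<bar>c + q\<bar>" by (metis abs_ge_self abs_mult)
    also have "\<dots> \<le> d * 2"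
      using assms by (intro mult_mono) (auto simp: abs_minus_commute)
    finally show ?thesis by simp
  qed
  moreover have "(l - a) * q\<^sup>2 \<le> 2 * l * d"
  proof (cases "l \<le> a")
    case True
    then have "(l - a) * q\<^sup>2 \<le> 0" by (simp add: mult_nonpos_nonneg)
    also have "0 \<le> 2 * l * d" using assms(1,2) by simp
    finally show ?thesis .
  next
    case False
    have "q\<^sup>2 \<le> 1" using assms(6) by (simp add: abs_square_le_1)
    then have "(l - a) * q\<^sup>2 \<le> l - a" using False by (simp add: mult_left_le)
    then show ?thesis using assms(4) by simp
  qed
  ultimately have "l * (c\<^sup>2 - q\<^sup>2) + (l - a) * q\<^sup>2 \<le> l * (2 * d) + 2 * l * d"
    using assms(1) by (intro add_mono mult_left_mono)
  then show ?thesis by (simp add: algebra_simps)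
qed

lemma abs_le_of_shifted_equation:
  fixes l m a c \<eta> r d lk e :: real
  assumes eq: "(l - m) * c = a * (c + \<eta>) + r" and \<eta>: "\<bar>\<eta>\<bar> \<le> d"
    and a: "l - 2 * l * d \<le> a" "0 \<le> a" and m: "lk \<le> m" and lk: "lk \<le> l"
    and e: "l * d \<le> e" "2 * e < lk" and d: "0 \<le> d" and l: "0 \<le> l"
  shows "\<bar>c\<bar> * (lk - 2 * e) \<le> l * d + \<bar>r\<bar>"
proof -
  define Z where "Z = a + m - l"
  define D where "D = lk - 2 * e"
  have e0: "0 \<le> e" using e(1) l d by (meson mult_nonneg_nonneg order_trans)
  have Dp: "0 < D" using e(2) by (simp add: D_def)
  have ZD: "D \<le> Z" unfolding Z_def D_def using a(1) m e(1) by linarith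
  have cZ: "\<bar>c\<bar> * Z \<le> a * d + \<bar>r\<bar>"
  proof -
    have "Z * c = - (a * \<eta> + r)" using eq by (simp add: Z_def algebra_simps)
    then have "\<bar>c\<bar> * Z = \<bar>a * \<eta> + r\<bar>"
      using ZD Dp by (metis abs_minus_cancel abs_mult abs_of_pos mult.commute order_less_le_trans)
    also have "\<dots> \<le> \<bar>a * \<eta>\<bar> + \<bar>r\<bar>" by (rule abs_triangle_ineq)
    also have "\<bar>a * \<eta>\<bar> \<le> a * d" using a(2) \<eta> by (simp add: abs_mult mult_left_mono)
    finally show ?thesis by simp
  qed
  \<comment> \<open>No upper bound on \<open>a\<close> is available, but \<open>a\<close> also enters \<open>Z\<close>: \<open>a / Z \<le> l / D\<close>.\<close>
  have aD: "a * D \<le> l * Z"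
  proof -
    have "(l * d) * (l - lk + 2 * e) \<le> e * l"
      using mult_mono[OF e(1), of "l - lk + 2 * e" l] lk e(2) e0 l d by simp
    then have "l * (l - lk) \<le> (l - 2 * l * d) * (l - D)"
      by (simp add: D_def algebra_simps)
    also have "\<dots> \<le> a * (l - D)"
      using a(1) lk e0 by (intro mult_right_mono) (simp_all add: D_def)
    finally have "l * (l - lk) \<le> a * (l - D)" .
    moreover have "l * (l - m) \<le> l * (l - lk)" using m l by (simp add: mult_left_mono)
    ultimately show ?thesis by (simp add: Z_def algebra_simps)
  qed
  have "(\<bar>c\<bar> * D) * Z \<le> (a * d + \<bar>r\<bar>) * D"
    using mult_right_mono[OF cZ, of D] Dp by (simp add: algebra_simps)
  also have "\<dots> \<le> (l * d + \<bar>r\<bar>) * Z"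
    using mult_right_mono[OF aD d] mult_left_mono[OF ZD, of "\<bar>r\<bar>"]
    by (simp add: algebra_simps)
  finally show ?thesis using ZD Dp by (simp add: D_def)
qed

lemma le_half_of_self_bound:
  fixes lk e x :: real
  assumes "0 < lk" "0 \<le> e" "20 * e \<le> 3 * lk" "0 \<le> x"
    and "x \<le> e * ((e + x) / (lk - 2 * e)) + x * (e / lk)"
  shows "x \<le> e / 2"
proof -
  have D: "7 / 10 * lk \<le> lk - 2 * e" using assms by simp
  have "e / (lk - 2 * e) \<le> 3 / 14" using assms D by (simp add: divide_le_eq)
  then have "(e / (lk - 2 * e)) * (e + x) \<le> 3 / 14 * (e + x)"
    using assms(2,4) by (intro mult_right_mono) simp_all
  moreover have "x * (e / lk) \<le> x * (3 / 20)"
    using assms by (intro mult_left_mono) (simp_all add: divide_le_eq)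
  ultimately show ?thesis using assms(2,5) by simp
qed

lemma square_add_le: "(x + y)\<^sup>2 \<le> 2 * x\<^sup>2 + 2 * (y::real)\<^sup>2"
  using sum_squares_bound[of x y] by (simp add: power2_sum)

locale deflation = eigenbasis S lam u for S :: "real^'n^'n" and lam u +
  fixes v :: "nat \<Rightarrow> real^'n" and w :: "real^'n" and k :: nat
  assumes psd: "\<And>x. 0 \<le> x \<bullet> (S *v x)"
    and lam_strict_decreasing: "\<And>i j. i \<in> {1..CARD('n)} \<Longrightarrow> j \<in> {1..CARD('n)} \<Longrightarrow>
      i < j \<Longrightarrow> lam j < lam i"
    and k_range: "1 \<le> k" "k < CARD('n)"
    and v_unit: "\<And>i. i \<in> {1..<k} \<Longrightarrow> norm (v i) = 1"
    and top: "is_top_eigvec (deflated S v k) w"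
    and sign: "0 \<le> w \<bullet> u k"
begin

definition a :: "nat \<Rightarrow> real" where "a i = v i \<bullet> (S *v v i)"
definition \<delta> :: "nat \<Rightarrow> real" where "\<delta> i = norm (u i - v i)"
definition \<epsilon> :: real where "\<epsilon> = (\<Sum>i\<in>{1..<k}. lam i * \<delta> i)"
definition g :: real where "g = lam k - lam (k + 1)"
definition \<mu> :: real where "\<mu> = w \<bullet> (deflated S v k *v w)"
definition c :: "nat \<Rightarrow> real" where "c j = w \<bullet> u j"
definition q :: "nat \<Rightarrow> real" where "q i = v i \<bullet> w"
definition E :: "real^'n" where "E = (\<Sum>i\<in>{1..<k}. (a i * q i) *\<^sub>R (v i - u i))"
definition \<rho> :: "nat \<Rightarrow> real" where "\<rho> j = u j \<bullet> E"

lemma lam_nonneg: "i \<in> {1..CARD('n)} \<Longrightarrow> 0 \<le> lam i"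
  using psd[of "u i"] by (simp add: inner_mult_u orthonormal)

lemma lam_le_lam_k: "j \<in> {1..CARD('n)} \<Longrightarrow> k \<le> j \<Longrightarrow> lam j \<le> lam k"
  using lam_strict_decreasing[of k j] k_range by (cases "k = j") auto

lemma lam_k_le_lam: "j \<in> {1..CARD('n)} \<Longrightarrow> j \<le> k \<Longrightarrow> lam k \<le> lam j"
  using lam_strict_decreasing[of j k] k_range by (cases "k = j") auto

lemma gap_pos: "0 < g"
  using lam_strict_decreasing[of k "k + 1"] k_range by (simp add: g_def)

lemma gap_le_lam_k: "g \<le> lam k"
  using lam_nonneg[of "k + 1"] k_range by (simp add: g_def)

lemma \<delta>_nonneg: "0 \<le> \<delta> i"
  by (simp add: \<delta>_def)

lemma \<epsilon>_term_nonneg: "i \<in> {1..<k} \<Longrightarrow> 0 \<le> lam i * \<delta> i"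
  using lam_nonneg[of i] k_range \<delta>_nonneg by simp

lemma \<epsilon>_nonneg: "0 \<le> \<epsilon>"
  unfolding \<epsilon>_def by (rule sum_nonneg) (rule \<epsilon>_term_nonneg)

lemma \<epsilon>_term_le: "i \<in> {1..<k} \<Longrightarrow> lam i * \<delta> i \<le> \<epsilon>"
  unfolding \<epsilon>_def by (rule member_le_sum) (simp_all add: \<epsilon>_term_nonneg)

lemma sum_\<delta>_le: "lam k * (\<Sum>i\<in>{1..<k}. \<delta> i) \<le> \<epsilon>"
  unfolding \<epsilon>_def sum_distrib_left
  by (rule sum_mono) (use lam_k_le_lam k_range \<delta>_nonneg in \<open>auto intro: mult_right_mono\<close>)

lemma a_nonneg: "0 \<le> a i"
  by (simp add: a_def psd)

lemma a_lower:
  assumes "i \<in> {1..<k}"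
  shows "lam i - 2 * lam i * \<delta> i \<le> a i"
proof -
  have i: "i \<in> {1..CARD('n)}" using assms k_range by simp
  define e where "e = v i - u i"
  have "v i = u i + e" by (simp add: e_def)
  then have a_expand: "a i = lam i + 2 * lam i * (e \<bullet> u i) + e \<bullet> (S *v e)"
    using inner_mult_commute[of "u i" e] orthonormal[OF i i]
    by (simp add: a_def matrix_vector_right_distrib inner_add_left inner_add_right inner_mult_u[OF i]
        algebra_simps)
  have "- \<delta> i \<le> e \<bullet> u i"
    using Cauchy_Schwarz_ineq2[of e "u i"] norm_u[OF i]
    by (simp add: e_def \<delta>_def norm_minus_commute)
  then have "lam i * (- \<delta> i) \<le> lam i * (e \<bullet> u i)"
    using lam_nonneg[OF i] by (rule mult_left_mono)
  then show ?thesis using a_expand psd[of e] by simp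
qed

lemma deflated_inner_commute: "x \<bullet> (deflated S v k *v y) = y \<bullet> (deflated S v k *v x)"
  by (rule deflated_symmetric) (rule inner_mult_commute)

lemma norm_w: "norm w = 1"
  using top by (simp add: is_top_eigvec_def)

lemma deflated_mult_w: "deflated S v k *v w = \<mu> *\<^sub>R w"
  unfolding \<mu>_def by (rule is_top_eigvec_eigenvalue[OF top])

lemma lam_k_le_\<mu>: "lam k \<le> \<mu>"
proof -
  obtain x where x: "x \<noteq> 0" "\<And>i. i \<in> {1..<k} \<Longrightarrow> v i \<bullet> x = 0"
    "\<And>j. j \<in> {1..CARD('n)} \<Longrightarrow> k < j \<Longrightarrow> x \<bullet> u j = 0"
    using exists_orthogonal_in_leading_span[of k v] k_range by auto
  have "lam k * (x \<bullet> x) = (\<Sum>j\<in>{1..CARD('n)}. lam k * ((x \<bullet> u j) * (x \<bullet> u j)))"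
    by (simp add: inner_eq_sum_coords[of x x] sum_distrib_left)
  also have "\<dots> \<le> (\<Sum>j\<in>{1..CARD('n)}. lam j * (x \<bullet> u j) * (x \<bullet> u j))"
  proof (rule sum_mono)
    fix j assume j: "j \<in> {1..CARD('n)}"
    show "lam k * ((x \<bullet> u j) * (x \<bullet> u j)) \<le> lam j * (x \<bullet> u j) * (x \<bullet> u j)"
      using x(3)[OF j] lam_k_le_lam[OF j]
      by (cases "k < j") (auto simp: mult.assoc intro: mult_right_mono)
  qed
  also have "\<dots> = x \<bullet> (deflated S v k *v x)"
    by (simp add: inner_deflated_mult x(2) inner_mult_eq_sum_coords)
  also have "\<dots> \<le> \<mu> * (x \<bullet> x)"
    using is_top_eigvec_rayleigh_le[OF deflated_inner_commute top, of x]
    by (simp add: \<mu>_def power2_norm_eq_inner)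
  finally show ?thesis using x(1) by simp
qed

lemma sum_c_sq: "(\<Sum>j\<in>{1..CARD('n)}. (c j)\<^sup>2) = 1"
  using inner_eq_sum_coords[of w w] norm_w by (simp add: c_def norm_eq_1 power2_eq_square)

lemma abs_c_le_1: "j \<in> {1..CARD('n)} \<Longrightarrow> \<bar>c j\<bar> \<le> 1"
  using Cauchy_Schwarz_ineq2[of w "u j"] norm_w norm_u by (simp add: c_def)

lemma abs_q_le_1: "i \<in> {1..<k} \<Longrightarrow> \<bar>q i\<bar> \<le> 1"
  using Cauchy_Schwarz_ineq2[of "v i" w] norm_w v_unit by (simp add: q_def)

lemma abs_q_diff_c_le: "\<bar>q i - c i\<bar> \<le> \<delta> i"
proof -
  have "q i - c i = (v i - u i) \<bullet> w"
    by (simp add: q_def c_def inner_diff_left inner_diff_right inner_commute)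
  then show ?thesis
    using Cauchy_Schwarz_ineq2[of "v i - u i" w] norm_w by (simp add: \<delta>_def norm_minus_commute)
qed

lemma \<mu>_eq: "\<mu> = (\<Sum>j\<in>{1..CARD('n)}. lam j * c j * c j) - (\<Sum>i\<in>{1..<k}. a i * q i * q i)"
  by (simp add: \<mu>_def inner_deflated_mult inner_mult_eq_sum_coords c_def q_def a_def)

lemma \<mu>_le: "\<mu> \<le> lam k + 4 * \<epsilon>"
proof -
  let ?N = "{1..CARD('n)}" and ?A = "{1..<k}"
  have AN: "?A \<subseteq> ?N" using k_range by auto
  have "(\<Sum>i\<in>?A. lam i * c i * c i) - (\<Sum>i\<in>?A. a i * q i * q i)
      = (\<Sum>i\<in>?A. lam i * (c i)\<^sup>2 - a i * (q i)\<^sup>2)"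
    by (simp add: sum_subtractf power2_eq_square mult.assoc)
  also have "\<dots> \<le> (\<Sum>i\<in>?A. 4 * (lam i * \<delta> i))"
  proof (rule sum_mono)
    fix i assume i: "i \<in> ?A"
    then have "i \<in> ?N" using AN by auto
    then show "lam i * (c i)\<^sup>2 - a i * (q i)\<^sup>2 \<le> 4 * (lam i * \<delta> i)"
      using weighted_sq_diff_le[OF lam_nonneg \<delta>_nonneg a_nonneg a_lower[OF i] abs_c_le_1
          abs_q_le_1[OF i] abs_q_diff_c_le] by simp
  qed
  also have "\<dots> = 4 * \<epsilon>" by (simp add: \<epsilon>_def sum_distrib_left)
  finally have head: "(\<Sum>i\<in>?A. lam i * c i * c i) - (\<Sum>i\<in>?A. a i * q i * q i) \<le> 4 * \<epsilon>" .
  have "(\<Sum>j\<in>?N - ?A. lam j * c j * c j) \<le> (\<Sum>j\<in>?N - ?A. lam k * (c j)\<^sup>2)"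
  proof (rule sum_mono)
    fix j assume "j \<in> ?N - ?A"
    then have "lam j \<le> lam k" by (auto intro: lam_le_lam_k)
    then show "lam j * c j * c j \<le> lam k * (c j)\<^sup>2"
      by (simp add: power2_eq_square mult.assoc mult_right_mono)
  qed
  also have "\<dots> \<le> lam k * (\<Sum>j\<in>?N. (c j)\<^sup>2)"
    unfolding sum_distrib_left[symmetric]
    using lam_nonneg[of k] k_range by (intro mult_left_mono sum_mono2) auto
  also have "\<dots> = lam k" by (simp only: sum_c_sq mult_1_right)
  finally have tail: "(\<Sum>j\<in>?N - ?A. lam j * c j * c j) \<le> lam k" .
  show ?thesis
    using \<mu>_eq head tail sum.subset_diff[OF AN finite_atLeastAtMost, of "\<lambda>j. lam j * c j * c j"]
    by linarith
qed

lemma coef_equation: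
  assumes j: "j \<in> {1..CARD('n)}"
  shows "(lam j - \<mu>) * c j = (if j \<in> {1..<k} then a j * q j else 0) + \<rho> j"
proof -
  let ?A = "{1..<k}"
  have "\<mu> * c j = u j \<bullet> (deflated S v k *v w)"
    using deflated_mult_w by (simp add: c_def inner_commute)
  also have "\<dots> = lam j * c j - (\<Sum>i\<in>?A. a i * q i * (v i \<bullet> u j))"
    using inner_mult_commute[of "u j" w]
    by (simp add: inner_deflated_mult inner_mult_u[OF j] a_def q_def c_def mult.assoc)
  also have "(\<Sum>i\<in>?A. a i * q i * (v i \<bullet> u j)) = (\<Sum>i\<in>?A. a i * q i * (u i \<bullet> u j)) + \<rho> j"
    by (simp add: \<rho>_def E_def inner_sum_right inner_diff_left inner_diff_right
        algebra_simps sum.distrib sum_subtractf inner_commute)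
  also have "(\<Sum>i\<in>?A. a i * q i * (u i \<bullet> u j)) = (\<Sum>i\<in>?A. if i = j then a j * q j else 0)"
    by (rule sum.cong) (use orthonormal j k_range in auto)
  also have "\<dots> = (if j \<in> ?A then a j * q j else 0)" by simp
  finally show ?thesis by (simp add: algebra_simps)
qed

lemma coef_bound_head:
  assumes small: "20 * \<epsilon> \<le> 3 * lam k" and i: "i \<in> {1..<k}"
  shows "\<bar>c i\<bar> * (lam k - 2 * \<epsilon>) \<le> lam i * \<delta> i + \<bar>\<rho> i\<bar>"
proof -
  have iN: "i \<in> {1..CARD('n)}" using i k_range by auto
  have "(lam i - \<mu>) * c i = a i * (c i + (q i - c i)) + \<rho> i"
    using coef_equation[OF iN] i by simp
  moreover have "lam k \<le> lam i" using lam_k_le_lam[OF iN] i by simp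
  moreover have "2 * \<epsilon> < lam k" using small gap_pos gap_le_lam_k by linarith
  ultimately show ?thesis
    using abs_le_of_shifted_equation[OF _ abs_q_diff_c_le a_lower[OF i] a_nonneg lam_k_le_\<mu> _
        \<epsilon>_term_le[OF i] _ \<delta>_nonneg lam_nonneg[OF iN]] by blast
qed

lemma abs_weight_bound:
  assumes small: "20 * \<epsilon> \<le> 3 * lam k" and i: "i \<in> {1..<k}"
  shows "\<bar>a i * q i\<bar> \<le> lam i * \<bar>c i\<bar> + \<bar>\<rho> i\<bar>"
proof -
  have iN: "i \<in> {1..CARD('n)}" using i k_range by auto
  have "lam k \<le> lam i" using lam_k_le_lam[OF iN] i by simp
  then have "\<bar>lam i - \<mu>\<bar> \<le> lam i"
    using lam_k_le_\<mu> \<mu>_le small gap_pos gap_le_lam_k by (simp add: abs_le_iff)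
  have "a i * q i = (lam i - \<mu>) * c i - \<rho> i" using coef_equation[OF iN] i by simp
  then have "\<bar>a i * q i\<bar> \<le> \<bar>lam i - \<mu>\<bar> * \<bar>c i\<bar> + \<bar>\<rho> i\<bar>"
    by (metis abs_mult abs_triangle_ineq4)
  also have "\<dots> \<le> lam i * \<bar>c i\<bar> + \<bar>\<rho> i\<bar>"
    using \<open>\<bar>lam i - \<mu>\<bar> \<le> lam i\<close> by (simp add: mult_right_mono)
  finally show ?thesis .
qed

lemma abs_\<rho>_le: "j \<in> {1..CARD('n)} \<Longrightarrow> \<bar>\<rho> j\<bar> \<le> norm E"
  using Cauchy_Schwarz_ineq2[of "u j" E] norm_u by (simp add: \<rho>_def)

lemma norm_E_le:
  assumes small: "20 * \<epsilon> \<le> 3 * lam k"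
  shows "norm E \<le> \<epsilon> / 2"
proof -
  \<comment> \<open>\<open>E\<close> re-enters its own bound through \<open>\<rho>\<close>; the resulting linear inequality is then solved.\<close>
  let ?A = "{1..<k}" and ?D = "lam k - 2 * \<epsilon>" and ?X = "norm E"
  have lk: "0 < lam k" using gap_pos gap_le_lam_k by linarith
  have weight: "\<bar>a i * q i\<bar> \<le> lam i * ((\<epsilon> + ?X) / ?D) + ?X" if i: "i \<in> ?A" for i
  proof -
    have iN: "i \<in> {1..CARD('n)}" using i k_range by auto
    have "\<bar>c i\<bar> * ?D \<le> \<epsilon> + ?X"
      using coef_bound_head[OF small i] \<epsilon>_term_le[OF i] abs_\<rho>_le[OF iN] by linarith
    then have "\<bar>c i\<bar> \<le> (\<epsilon> + ?X) / ?D" using small lk by (simp add: le_divide_eq)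
    then have "lam i * \<bar>c i\<bar> \<le> lam i * ((\<epsilon> + ?X) / ?D)"
      using lam_nonneg[OF iN] by (rule mult_left_mono)
    then show ?thesis using abs_weight_bound[OF small i] abs_\<rho>_le[OF iN] by linarith
  qed
  have "?X \<le> (\<Sum>i\<in>?A. norm ((a i * q i) *\<^sub>R (v i - u i)))"
    unfolding E_def by (rule norm_sum)
  also have "\<dots> = (\<Sum>i\<in>?A. \<bar>a i * q i\<bar> * \<delta> i)"
    by (simp add: \<delta>_def norm_minus_commute)
  also have "\<dots> \<le> (\<Sum>i\<in>?A. (lam i * \<delta> i) * ((\<epsilon> + ?X) / ?D) + ?X * \<delta> i)"
  proof (rule sum_mono)
    fix i assume "i \<in> ?A"
    have "\<bar>a i * q i\<bar> * \<delta> i \<le> (lam i * ((\<epsilon> + ?X) / ?D) + ?X) * \<delta> i"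
      using weight[OF \<open>i \<in> ?A\<close>] \<delta>_nonneg by (rule mult_right_mono)
    then show "\<bar>a i * q i\<bar> * \<delta> i \<le> (lam i * \<delta> i) * ((\<epsilon> + ?X) / ?D) + ?X * \<delta> i"
      by (simp add: algebra_simps)
  qed
  also have "\<dots> = \<epsilon> * ((\<epsilon> + ?X) / ?D) + ?X * (\<Sum>i\<in>?A. \<delta> i)"
    unfolding sum.distrib sum_distrib_right[symmetric] sum_distrib_left[symmetric] \<epsilon>_def ..
  also have "\<dots> \<le> \<epsilon> * ((\<epsilon> + ?X) / ?D) + ?X * (\<epsilon> / lam k)"
  proof -
    have "(\<Sum>i\<in>?A. \<delta> i) \<le> \<epsilon> / lam k"
      using sum_\<delta>_le lk by (simp add: le_divide_eq mult.commute)
    then have "?X * (\<Sum>i\<in>?A. \<delta> i) \<le> ?X * (\<epsilon> / lam k)" by (rule mult_left_mono) simp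
    then show ?thesis by simp
  qed
  finally show ?thesis by (rule le_half_of_self_bound[OF lk \<epsilon>_nonneg small norm_ge_zero])
qed

lemma coef_bound_tail:
  assumes j: "j \<in> {1..CARD('n)}" "k < j"
  shows "g * \<bar>c j\<bar> \<le> \<bar>\<rho> j\<bar>"
proof -
  have "lam j \<le> lam (k + 1)"
    using lam_strict_decreasing[of "k + 1" j] j k_range by (cases "j = k + 1") auto
  then have "g \<le> \<mu> - lam j" using lam_k_le_\<mu> by (simp add: g_def)
  then have "g * \<bar>c j\<bar> \<le> \<bar>(lam j - \<mu>) * c j\<bar>"
    using gap_pos by (simp add: abs_mult mult_right_mono)
  also have "\<dots> = \<bar>\<rho> j\<bar>" using coef_equation[OF j(1)] j(2) by simp
  finally show ?thesis .
qed

lemma sum_sq_\<epsilon>_terms_le: "(\<Sum>i\<in>{1..<k}. (lam i * \<delta> i)\<^sup>2) \<le> \<epsilon>\<^sup>2"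
proof -
  have "(\<Sum>i\<in>{1..<k}. (lam i * \<delta> i)\<^sup>2) \<le> (\<Sum>i\<in>{1..<k}. (lam i * \<delta> i) * \<epsilon>)"
    by (rule sum_mono) (simp add: power2_eq_square mult_left_mono \<epsilon>_term_le \<epsilon>_term_nonneg)
  also have "\<dots> = \<epsilon>\<^sup>2" by (simp add: \<epsilon>_def power2_eq_square sum_distrib_right)
  finally show ?thesis .
qed

lemma sum_sq_\<rho>_eq: "(\<Sum>j\<in>{1..CARD('n)}. (\<rho> j)\<^sup>2) = (norm E)\<^sup>2"
  unfolding power2_norm_eq_inner using inner_eq_sum_coords[of E E]
  by (simp add: \<rho>_def power2_eq_square inner_commute)

lemma coef_bound_off_k:
  assumes small: "20 * \<epsilon> < 3 * g" and j: "j \<in> {1..CARD('n)} - {k}"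
  shows "(g - 2 * \<epsilon>) * \<bar>c j\<bar> \<le> (if j \<in> {1..<k} then lam j * \<delta> j else 0) + \<bar>\<rho> j\<bar>"
proof (cases "j < k")
  case True
  then have "j \<in> {1..<k}" using j by auto
  have "(g - 2 * \<epsilon>) * \<bar>c j\<bar> \<le> \<bar>c j\<bar> * (lam k - 2 * \<epsilon>)"
    using gap_le_lam_k by (simp add: mult.commute mult_left_mono)
  also have "\<dots> \<le> lam j * \<delta> j + \<bar>\<rho> j\<bar>"
    using small gap_le_lam_k by (intro coef_bound_head[OF _ \<open>j \<in> {1..<k}\<close>]) linarith
  finally show ?thesis using \<open>j \<in> {1..<k}\<close> by simp
next
  case False
  then have "k < j" using j by auto
  have "(g - 2 * \<epsilon>) * \<bar>c j\<bar> \<le> g * \<bar>c j\<bar>" using \<epsilon>_nonneg by (simp add: mult_right_mono)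
  then show ?thesis using coef_bound_tail[of j] j \<open>k < j\<close> False by simp
qed

lemma norm_diff_u_k_sq_le: "(norm (w - u k))\<^sup>2 \<le> 2 * (1 - (c k)\<^sup>2)"
proof -
  have k: "k \<in> {1..CARD('n)}" using k_range by simp
  have "(norm (w - u k))\<^sup>2 = 2 - 2 * c k"
    using norm_w orthonormal[OF k k]
    by (simp add: power2_norm_eq_inner inner_diff_left inner_diff_right inner_commute c_def norm_eq_1)
  moreover have "(c k)\<^sup>2 \<le> c k"
    using sign abs_c_le_1[OF k] by (simp add: c_def power2_eq_square mult_left_le)
  ultimately show ?thesis by simp
qed

lemma norm_diff_u_k_le: "norm (w - u k) \<le> 3 / 2"
proof -
  have "(norm (w - u k))\<^sup>2 \<le> 2"
    using norm_diff_u_k_sq_le by (rule order_trans) simp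
  also have "\<dots> \<le> (3 / 2)\<^sup>2" by (simp add: power2_eq_square)
  finally show ?thesis by (rule power2_le_imp_le) simp
qed

lemma gap_sq_off_k_le:
  assumes small: "20 * \<epsilon> < 3 * g"
  shows "(g - 2 * \<epsilon>)\<^sup>2 * (1 - (c k)\<^sup>2) \<le> 5 / 2 * \<epsilon>\<^sup>2"
proof -
  let ?N = "{1..CARD('n)}" and ?G = "g - 2 * \<epsilon>"
  define t where "t j = (if j \<in> {1..<k} then lam j * \<delta> j else 0)" for j
  have "(\<Sum>j\<in>?N - {k}. (c j)\<^sup>2) = 1 - (c k)\<^sup>2"
    using sum_diff1[of ?N "\<lambda>j. (c j)\<^sup>2" k] sum_c_sq k_range by simp
  then have "?G\<^sup>2 * (1 - (c k)\<^sup>2) = (\<Sum>j\<in>?N - {k}. (?G * c j)\<^sup>2)"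
    by (simp add: power_mult_distrib flip: sum_distrib_left)
  also have "\<dots> \<le> (\<Sum>j\<in>?N - {k}. 2 * (t j)\<^sup>2 + 2 * (\<rho> j)\<^sup>2)"
  proof (rule sum_mono)
    fix j assume "j \<in> ?N - {k}"
    then have "\<bar>?G * c j\<bar> \<le> t j + \<bar>\<rho> j\<bar>"
      using coef_bound_off_k[OF small] \<epsilon>_nonneg small by (simp add: t_def abs_mult)
    then have "(?G * c j)\<^sup>2 \<le> (t j + \<bar>\<rho> j\<bar>)\<^sup>2"
      by (metis abs_ge_zero power2_abs power_mono)
    then show "(?G * c j)\<^sup>2 \<le> 2 * (t j)\<^sup>2 + 2 * (\<rho> j)\<^sup>2"
      using square_add_le[of "t j" "\<bar>\<rho> j\<bar>"] by simp
  qed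
  also have "\<dots> \<le> 2 * \<epsilon>\<^sup>2 + 2 * (norm E)\<^sup>2"
  proof -
    have "(\<Sum>j\<in>?N - {k}. (t j)\<^sup>2) = (\<Sum>i\<in>{1..<k}. (lam i * \<delta> i)\<^sup>2)"
      using k_range by (intro sum.mono_neutral_cong_right) (auto simp: t_def)
    moreover have "(\<Sum>j\<in>?N - {k}. (\<rho> j)\<^sup>2) \<le> (\<Sum>j\<in>?N. (\<rho> j)\<^sup>2)"
      by (rule sum_mono2) auto
    ultimately show ?thesis
      using sum_sq_\<epsilon>_terms_le sum_sq_\<rho>_eq by (simp add: sum.distrib flip: sum_distrib_left)
  qed
  also have "\<dots> \<le> 5 / 2 * \<epsilon>\<^sup>2"
  proof -
    have "norm E \<le> \<epsilon> / 2" using small gap_le_lam_k by (intro norm_E_le) linarith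
    then show ?thesis using power_mono[of "norm E" "\<epsilon> / 2" 2] by (simp add: power_divide)
  qed
  finally show ?thesis .
qed

theorem gap_mult_norm_diff_le:
  assumes small: "20 * \<epsilon> < 3 * g"
  shows "(g - 2 * \<epsilon>) * norm (w - u k) \<le> sqrt 5 * \<epsilon>"
proof -
  let ?G = "g - 2 * \<epsilon>"
  have "?G\<^sup>2 * (norm (w - u k))\<^sup>2 \<le> ?G\<^sup>2 * (2 * (1 - (c k)\<^sup>2))"
    by (rule mult_left_mono[OF norm_diff_u_k_sq_le]) simp
  also have "\<dots> = 2 * (?G\<^sup>2 * (1 - (c k)\<^sup>2))" by (rule mult.left_commute)
  also have "\<dots> \<le> (sqrt 5 * \<epsilon>)\<^sup>2"
    using gap_sq_off_k_le[OF small] by (simp add: power_mult_distrib)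
  finally have "(?G * norm (w - u k))\<^sup>2 \<le> (sqrt 5 * \<epsilon>)\<^sup>2"
    by (simp add: power_mult_distrib)
  then show ?thesis by (rule power2_le_imp_le) (simp add: \<epsilon>_nonneg)
qed

end

lemma large_error_bound:
  fixes g e c0 :: real
  assumes "0 < g" "3 * g \<le> 20 * e" "4 * c0 * e \<le> (c0 - 1) * g" "1 < c0"
  shows "3 / 2 * g \<le> 4 * c0 * e"
proof -
  have "g \<le> c0 * (g - 4 * e)" using assms(3) by (simp add: algebra_simps)
  also have "\<dots> \<le> c0 * (2 / 5 * g)" using assms(2,4) by (intro mult_left_mono) simp_all
  finally have "5 / 2 \<le> c0" using assms(1) by simp
  then have "4 * (5 / 2) * (3 / 20 * g) \<le> 4 * c0 * e"
    using assms(1,2) by (intro mult_mono) simp_all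
  then show ?thesis by simp
qed

lemma small_error_bound:
  fixes g e n :: real
  assumes "0 < g" "0 \<le> e" "20 * e < 3 * g" "0 \<le> n" "(g - 2 * e) * n \<le> sqrt 5 * e"
  shows "g * n \<le> 4 * e"
proof -
  have "sqrt 5 \<le> 7 / 10 * 4" by (rule real_le_lsqrt) (simp_all add: power2_eq_square)
  then have "sqrt 5 * e \<le> 7 / 10 * 4 * e" using assms(2) by (rule mult_right_mono)
  moreover have "7 / 10 * g * n \<le> (g - 2 * e) * n" using assms(3,4) by (intro mult_right_mono) simp_all
  ultimately show ?thesis using assms(5) by simp
qed

theorem lemma2:
  fixes S :: "real^'n^'n"
    and lam :: "nat \<Rightarrow> real"
    and u :: "nat \<Rightarrow> real^'n"
    and v :: "nat \<Rightarrow> real^'n"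
    and w :: "real^'n"
    and k :: nat and c0 :: real
  assumes sym: "transpose S = S"
    and psd: "\<forall>x. 0 \<le> x \<bullet> (S *v x)"
    and eig: "\<forall>i\<in>{1..CARD('n)}. S *v u i = lam i *\<^sub>R u i"
    and orth: "\<forall>i\<in>{1..CARD('n)}. \<forall>j\<in>{1..CARD('n)}. u i \<bullet> u j = (if i = j then 1 else 0)"
    and lam1: "lam 1 = 1"
    and lam_dec: "\<forall>i\<in>{1..CARD('n)}. \<forall>j\<in>{1..CARD('n)}. i < j \<longrightarrow> lam j < lam i"
    and k: "1 \<le> k" "k \<le> CARD('n) - 1"
    and vunit: "\<forall>k'\<in>{1..<k}. norm (v k') = 1"
    and top: "is_top_eigvec (deflated S v k) w"
    and sign: "0 \<le> w \<bullet> u k"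
    and c0: "c0 > 1"
    and small: "(\<Sum>k'\<in>{1..<k}. lam k' * norm (u k' - v k'))
                  \<le> (c0 - 1) / (4 * c0) * (lam k - lam (k + 1))"
  shows "norm (w - u k) \<le> 4 * c0 / (lam k - lam (k + 1)) * (\<Sum>k'\<in>{1..<k}. lam k' * norm (u k' - v k'))"
proof -
  interpret deflation S lam u v w k
    using eig orth psd lam_dec k vunit top sign by unfold_locales auto
  have err: "(\<Sum>k'\<in>{1..<k}. lam k' * norm (u k' - v k')) = \<epsilon>" by (simp add: \<epsilon>_def \<delta>_def)
  have hyp: "4 * c0 * \<epsilon> \<le> (c0 - 1) * g"
    using small c0 unfolding err by (simp add: g_def field_simps)
  have "g * norm (w - u k) \<le> 4 * c0 * \<epsilon>"
  proof (cases "20 * \<epsilon> < 3 * g")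
    case True
    then have "g * norm (w - u k) \<le> 4 * \<epsilon>"
      by (intro small_error_bound gap_pos \<epsilon>_nonneg norm_ge_zero gap_mult_norm_diff_le)
    also have "\<dots> \<le> 4 * c0 * \<epsilon>" using c0 \<epsilon>_nonneg by (simp add: mult_right_mono)
    finally show ?thesis .
  next
    case False
    have "g * norm (w - u k) \<le> 3 / 2 * g" using norm_diff_u_k_le gap_pos by simp
    also have "\<dots> \<le> 4 * c0 * \<epsilon>"
      using False gap_pos c0 hyp by (intro large_error_bound) simp_all
    finally show ?thesis .
  qed
  then show ?thesis using gap_pos unfolding err by (simp add: g_def field_simps)
qed

end
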